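(* Let $m,n\in\mathbb N$. Then for all Banach spaces $X,Y$ and all bounded linear operators $T:X\to Y$, $$\tau(T|\mathcal H(\mathbb D_{m+1}^{m+n}))=\tau(T|\mathcal H(\mathbb D_1^n)).$$
   Context: Dyadic intervals: $\Delta_k^{(j)}:=[\frac{j-1}{2^k},\frac{j}{2^k})$. Haar functions: for $k\ge1$, integer $j$, $\chi_k^{(j)}(t)=+2^{(k-1)/2}$ on $\Delta_k^{(2j-1)}$, $-2^{(k-1)/2}$ on $\Delta_k^{(2j)}$, $0$ otherwise, $t\in[0,1)$. $\mathbb D_m^n:=\{(k,j):k=m,\dots,n;\ j=1,\dots,2^{k-1}\}$. For a finite set $\mathbb F$ of such indices and bounded linear $T:X\to Y$, $\tau(T|\mathcal H(\mathbb F))$ is the least $c\ge0$ such that $\|\sum_{(k,j)\in\mathbb F}Tx_k^{(j)}\chi_k^{(j)}|L_2\|\le c(\sum_{(k,j)\in\mathbb F}\|x_k^{(j)}\|^2)^{1/2}$ for all $x_k^{(j)}\in X$, where $\|\cdot|L_2\|$ is the Bochner $L_2([0,1),Y)$ norm. *)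

theory Defs
  imports "HOL-Analysis.Analysis"
begin

definition dyadic :: "nat \<Rightarrow> int \<Rightarrow> real set" where
  "dyadic k j = {(real_of_int j - 1) / 2 ^ k ..< real_of_int j / 2 ^ k}"

definition haar :: "nat \<Rightarrow> int \<Rightarrow> real \<Rightarrow> real" where
  "haar k j t =
     (if t \<in> {0..<1} \<and> t \<in> dyadic k (2 * j - 1) then 2 powr ((real k - 1) / 2)
      else if t \<in> {0..<1} \<and> t \<in> dyadic k (2 * j) then - (2 powr ((real k - 1) / 2))
      else 0)"

definition dyadic_index :: "nat \<Rightarrow> nat \<Rightarrow> (nat \<times> int) set" where
  "dyadic_index m n = {(k, j). m \<le> k \<and> k \<le> n \<and> 1 \<le> j \<and> j \<le> 2 ^ (k - 1)}"

definition L2_norm :: "(real \<Rightarrow> 'b::real_normed_vector) \<Rightarrow> real" where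
  "L2_norm f = sqrt (LINT t : {0..<1} | lborel. (norm (f t))\<^sup>2)"

definition tau :: "('a::real_normed_vector \<Rightarrow> 'b::real_normed_vector) \<Rightarrow> (nat \<times> int) set \<Rightarrow> real" where
  "tau T F = Inf {c. 0 \<le> c \<and> (\<forall>x :: nat \<times> int \<Rightarrow> 'a.
      L2_norm (\<lambda>t. \<Sum>(k, j)\<in>F. haar k j t *\<^sub>R T (x (k, j)))
        \<le> c * sqrt (\<Sum>(k, j)\<in>F. (norm (x (k, j)))\<^sup>2))}"

end

theory Submission
  imports Defs
begin

text \<open>The Haar functions of level k + 1 are those of level k, compressed into [0, 1/2) or
  into [1/2, 1) and multiplied by \<open>\<surd>2\<close>. So a Haar sum over D_(a+1)^(b+1) is the sum of two rescaled
  Haar sums over D_a^b with disjoint supports, and the substitution s = 2t shows that its squared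
  L_2 norm is the sum of their squared L_2 norms; the squared norms of the coefficients split in
  the same way. Hence c is an admissible constant for D_(a+1)^(b+1) iff it is one for D_a^b (for
  the converse, put zero coefficients on the right half), and induction on the shift concludes.\<close>

lemma dyadic_subset_unit:
  assumes "1 \<le> i" "i \<le> 2 ^ k"
  shows "dyadic k i \<subseteq> {0..<1}"
proof -
  have "real_of_int i \<le> 2 ^ k"
    using assms(2) by (metis of_int_le_iff of_int_numeral of_int_power)
  then have "real_of_int i / 2 ^ k \<le> 1"
    by (simp add: divide_simps)
  moreover have "0 \<le> (real_of_int i - 1) / 2 ^ k"
    using assms(1) by simp
  ultimately show ?thesis
    unfolding dyadic_def by auto
qed

lemma mem_dyadic_Suc_iff: "t \<in> dyadic (Suc k) i \<longleftrightarrow> 2 * t \<in> dyadic k i"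
  by (auto simp: dyadic_def field_simps)

lemma mem_dyadic_Suc_shift_iff: "t \<in> dyadic (Suc k) (i + 2 ^ k) \<longleftrightarrow> 2 * t - 1 \<in> dyadic k i"
  by (auto simp: dyadic_def field_simps)

lemma haar_in_range:
  assumes "1 \<le> k" "1 \<le> j" "j \<le> 2 ^ (k - 1)"
  shows "haar k j t = (if t \<in> dyadic k (2 * j - 1) then 2 powr ((real k - 1) / 2)
    else if t \<in> dyadic k (2 * j) then - (2 powr ((real k - 1) / 2)) else 0)"
proof -
  have "2 * j \<le> 2 ^ k"
    using assms by (cases k) auto
  then have "dyadic k (2 * j - 1) \<subseteq> {0..<1}" "dyadic k (2 * j) \<subseteq> {0..<1}"
    using assms(2) by (intro dyadic_subset_unit; linarith)+
  then show ?thesis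
    unfolding haar_def by auto
qed

lemma two_powr_half_Suc: "2 powr ((real (Suc k) - 1) / 2) = sqrt 2 * 2 powr ((real k - 1) / 2)"
proof -
  have "2 powr ((real (Suc k) - 1) / 2) = 2 powr (1 / 2) * 2 powr ((real k - 1) / 2)"
    unfolding powr_add[symmetric] by (simp add: field_simps)
  then show ?thesis
    by (simp add: powr_half_sqrt)
qed

lemma haar_Suc_left:
  assumes "1 \<le> k" "1 \<le> j" "j \<le> 2 ^ (k - 1)"
  shows "haar (Suc k) j t = sqrt 2 * haar k j (2 * t)"
proof -
  have "(2::int) ^ (k - 1) \<le> 2 ^ k"
    by (rule power_increasing) simp_all
  then have "1 \<le> Suc k" "j \<le> 2 ^ (Suc k - 1)"
    using assms(3) by (auto simp del: power_increasing_iff)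
  note haar_Suc = haar_in_range[OF this(1) assms(2) this(2)]
  show ?thesis
    unfolding haar_in_range[OF assms] haar_Suc two_powr_half_Suc
    by (simp add: mem_dyadic_Suc_iff)
qed

lemma haar_Suc_right:
  assumes "1 \<le> k" "1 \<le> j" "j \<le> 2 ^ (k - 1)"
  shows "haar (Suc k) (j + 2 ^ (k - 1)) t = sqrt 2 * haar k j (2 * t - 1)"
proof -
  have pow: "(2::int) ^ k = 2 * 2 ^ (k - 1)"
    using assms(1) by (cases k) auto
  have "1 \<le> Suc k" "1 \<le> j + 2 ^ (k - 1)" "j + 2 ^ (k - 1) \<le> 2 ^ (Suc k - 1)"
    using assms pow by auto
  note haar_Suc = haar_in_range[OF this]
  have double: "2 * (j + 2 ^ (k - 1)) = 2 * j + 2 ^ k" "2 * j + 2 ^ k - 1 = (2 * j - 1) + 2 ^ k"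
    using pow by simp_all
  show ?thesis
    unfolding haar_in_range[OF assms] haar_Suc double two_powr_half_Suc mem_dyadic_Suc_shift_iff
    by simp
qed

lemma haar_eq_0: "t \<notin> {0..<1} \<Longrightarrow> haar k j t = 0"
  unfolding haar_def by auto

lemma abs_haar_le: "\<bar>haar k j t\<bar> \<le> 2 powr ((real k - 1) / 2)"
  unfolding haar_def by auto

text \<open>The Haar sums take values in a normed space that need not be second countable, so their
  measurability comes from their finite range rather than from \<open>borel_measurable_sum\<close>.\<close>

lemma simple_function_haar: "simple_function lborel (haar k j)"
proof (rule simple_function_borel_measurable)
  show "haar k j \<in> borel_measurable lborel"
    unfolding haar_def dyadic_def by measurable
  have "haar k j ` space lborel \<subseteq> {2 powr ((real k - 1) / 2), - (2 powr ((real k - 1) / 2)), 0}"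
    unfolding haar_def by auto
  then show "finite (haar k j ` space lborel)"
    by (rule finite_subset) simp
qed

lemma finite_dyadic_index: "finite (dyadic_index a b)"
proof (rule finite_subset)
  show "dyadic_index a b \<subseteq> {..b} \<times> {1..2 ^ b}"
  proof
    fix p
    assume "p \<in> dyadic_index a b"
    then obtain k j where "p = (k, j)" "k \<le> b" "1 \<le> j" "j \<le> 2 ^ (k - 1)"
      unfolding dyadic_index_def by auto
    moreover have "(2::int) ^ (k - 1) \<le> 2 ^ b"
      using \<open>k \<le> b\<close> by (intro power_increasing) auto
    ultimately show "p \<in> {..b} \<times> {1..2 ^ b}"
      by (auto simp del: power_increasing_iff)
  qed
qed simp

text \<open>chi_(k+1)^(j) and chi_(k+1)^(j + 2^(k-1)) are the copies of chi_k^(j) on [0, 1/2) and on [1/2, 1).\<close>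

definition half_left :: "nat \<times> int \<Rightarrow> nat \<times> int" where
  "half_left = (\<lambda>(k, j). (Suc k, j))"

definition half_right :: "nat \<times> int \<Rightarrow> nat \<times> int" where
  "half_right = (\<lambda>(k, j). (Suc k, j + 2 ^ (k - 1)))"

lemma inj_half_left: "inj half_left"
  unfolding half_left_def inj_def by auto

lemma inj_half_right: "inj half_right"
  unfolding half_right_def inj_def by auto

lemma dyadic_index_Suc:
  assumes "1 \<le> a"
  shows "dyadic_index (Suc a) (Suc b) = half_left ` dyadic_index a b \<union> half_right ` dyadic_index a b"
proof (intro equalityI subsetI)
  fix p
  assume "p \<in> dyadic_index (Suc a) (Suc b)"
  then obtain k' j where "p = (k', j)" "Suc a \<le> k'" "k' \<le> Suc b" "1 \<le> j" "j \<le> 2 ^ (k' - 1)"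
    unfolding dyadic_index_def by auto
  moreover obtain k where "k' = Suc k"
    using \<open>Suc a \<le> k'\<close> by (auto dest: Suc_le_D)
  ultimately have p: "p = (Suc k, j)" and kj: "a \<le> k" "k \<le> b" "1 \<le> j" "j \<le> 2 ^ k"
    by auto
  have pow: "(2::int) ^ k = 2 * 2 ^ (k - 1)"
    using assms kj(1) by (cases k) auto
  show "p \<in> half_left ` dyadic_index a b \<union> half_right ` dyadic_index a b"
  proof (cases "j \<le> 2 ^ (k - 1)")
    case True
    then have "(k, j) \<in> dyadic_index a b" and "p = half_left (k, j)"
      using kj p unfolding dyadic_index_def half_left_def by auto
    then show ?thesis
      by blast
  next
    case False
    then have "(k, j - 2 ^ (k - 1)) \<in> dyadic_index a b" and "p = half_right (k, j - 2 ^ (k - 1))"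
      using kj p pow unfolding dyadic_index_def half_right_def by auto
    then show ?thesis
      by blast
  qed
next
  fix p
  assume "p \<in> half_left ` dyadic_index a b \<union> half_right ` dyadic_index a b"
  then obtain k j where "(k, j) \<in> dyadic_index a b" "p = half_left (k, j) \<or> p = half_right (k, j)"
    by auto
  moreover have "(2::int) ^ (Suc k - 1) = 2 * 2 ^ (k - 1)" if "1 \<le> k"
    using that by (cases k) auto
  ultimately show "p \<in> dyadic_index (Suc a) (Suc b)"
    using assms unfolding dyadic_index_def half_left_def half_right_def by auto
qed

lemma disjoint_half_left_half_right:
  "half_left ` dyadic_index a b \<inter> half_right ` dyadic_index a b = {}"
  unfolding dyadic_index_def half_left_def half_right_def by auto

lemma sum_dyadic_index_Suc:
  assumes "1 \<le> a"
  shows "(\<Sum>p\<in>dyadic_index (Suc a) (Suc b). f p) =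
    (\<Sum>p\<in>dyadic_index a b. f (half_left p)) + (\<Sum>p\<in>dyadic_index a b. f (half_right p))"
  unfolding dyadic_index_Suc[OF assms]
  by (simp add: sum.union_disjoint finite_dyadic_index disjoint_half_left_half_right
      sum.reindex inj_on_subset[OF inj_half_left] inj_on_subset[OF inj_half_right])

definition haar_sum :: "(nat \<times> int) set \<Rightarrow> (nat \<times> int \<Rightarrow> 'b::real_normed_vector) \<Rightarrow> real \<Rightarrow> 'b" where
  "haar_sum F y t = (\<Sum>(k, j)\<in>F. haar k j t *\<^sub>R y (k, j))"

lemma haar_sum_eq_0: "t \<notin> {0..<1} \<Longrightarrow> haar_sum F y t = 0"
  unfolding haar_sum_def by (simp add: haar_eq_0)

lemma haar_sum_cong: "(\<And>p. p \<in> F \<Longrightarrow> y p = z p) \<Longrightarrow> haar_sum F y = haar_sum F z"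
  unfolding haar_sum_def case_prod_unfold by (intro ext sum.cong) auto

lemma haar_sum_dyadic_index_Suc:
  assumes "1 \<le> a"
  shows "haar_sum (dyadic_index (Suc a) (Suc b)) y t = sqrt 2 *\<^sub>R
    (haar_sum (dyadic_index a b) (y \<circ> half_left) (2 * t) +
     haar_sum (dyadic_index a b) (y \<circ> half_right) (2 * t - 1))"
  unfolding haar_sum_def sum_dyadic_index_Suc[OF assms] scaleR_add_right scaleR_sum_right
proof (intro arg_cong2[where f = "(+)"] sum.cong refl)
  fix p
  assume "p \<in> dyadic_index a b"
  then obtain k j where p: "p = (k, j)" and kj: "1 \<le> k" "1 \<le> j" "j \<le> 2 ^ (k - 1)"
    using assms unfolding dyadic_index_def by auto
  then show "(case half_left p of (k, j) \<Rightarrow> haar k j t *\<^sub>R y (k, j)) =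
      sqrt 2 *\<^sub>R (case p of (k, j) \<Rightarrow> haar k j (2 * t) *\<^sub>R (y \<circ> half_left) (k, j))"
    and "(case half_right p of (k, j) \<Rightarrow> haar k j t *\<^sub>R y (k, j)) =
      sqrt 2 *\<^sub>R (case p of (k, j) \<Rightarrow> haar k j (2 * t - 1) *\<^sub>R (y \<circ> half_right) (k, j))"
    by (simp_all add: half_left_def half_right_def haar_Suc_left[OF kj] haar_Suc_right[OF kj, simplified])
qed

lemma simple_function_haar_sum: "simple_function lborel (haar_sum F y)"
  unfolding haar_sum_def case_prod_unfold
  by (intro simple_function_sum) (rule simple_function_compose1[OF simple_function_haar])

lemma integrable_norm_haar_sum_sq:
  assumes "finite F"
  shows "integrable lborel (\<lambda>t. (norm (haar_sum F y t))\<^sup>2)"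
proof (rule Bochner_Integration.integrable_bound)
  define B where "B = (\<Sum>(k, j)\<in>F. 2 powr ((real k - 1) / 2) * norm (y (k, j)))"
  have "norm (haar_sum F y t) \<le> B" for t
    unfolding haar_sum_def B_def case_prod_unfold
    by (rule order_trans[OF norm_sum sum_mono]) (simp add: abs_haar_le mult_right_mono)
  then have "(norm (haar_sum F y t))\<^sup>2 \<le> B\<^sup>2 * indicator {0..<1} t" for t :: real
    by (cases "t \<in> {0..<1}") (auto simp: haar_sum_eq_0 power_mono)
  then show "AE t in lborel. norm ((norm (haar_sum F y t))\<^sup>2) \<le> norm (B\<^sup>2 * indicator {0..<1::real} t)"
    by simp
  show "integrable lborel (\<lambda>t. B\<^sup>2 * indicator {0..<1::real} t)"
    by (intro integrable_mult_right integrable_real_indicator) auto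
  show "(\<lambda>t. (norm (haar_sum F y t))\<^sup>2) \<in> borel_measurable lborel"
    by (rule borel_measurable_simple_function, rule simple_function_compose1[OF simple_function_haar_sum])
qed

definition haar_energy :: "(nat \<times> int) set \<Rightarrow> (nat \<times> int \<Rightarrow> 'b::real_normed_vector) \<Rightarrow> real" where
  "haar_energy F y = (\<integral>t. (norm (haar_sum F y t))\<^sup>2 \<partial>lborel)"

lemma L2_norm_haar_sum: "L2_norm (haar_sum F y) = sqrt (haar_energy F y)"
proof -
  have "(\<lambda>t. indicator {0..<1} t *\<^sub>R (norm (haar_sum F y t))\<^sup>2) = (\<lambda>t. (norm (haar_sum F y t))\<^sup>2)"
  proof
    fix t :: real
    show "indicator {0..<1} t *\<^sub>R (norm (haar_sum F y t))\<^sup>2 = (norm (haar_sum F y t))\<^sup>2"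
      by (cases "t \<in> {0..<1}") (simp_all add: haar_sum_eq_0)
  qed
  then show ?thesis
    unfolding L2_norm_def haar_energy_def set_lebesgue_integral_def by simp
qed

lemma haar_energy_cong: "(\<And>p. p \<in> F \<Longrightarrow> y p = z p) \<Longrightarrow> haar_energy F y = haar_energy F z"
  unfolding haar_energy_def by (metis haar_sum_cong)

lemma haar_energy_eq_0: "(\<And>p. p \<in> F \<Longrightarrow> y p = 0) \<Longrightarrow> haar_energy F y = 0"
  unfolding haar_energy_def haar_sum_def case_prod_unfold by simp

lemma norm_haar_sum_dyadic_index_Suc_sq:
  assumes "1 \<le> a"
  shows "(norm (haar_sum (dyadic_index (Suc a) (Suc b)) y t))\<^sup>2 =
    2 * (norm (haar_sum (dyadic_index a b) (y \<circ> half_left) (2 * t)))\<^sup>2 +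
    2 * (norm (haar_sum (dyadic_index a b) (y \<circ> half_right) (2 * t - 1)))\<^sup>2"
proof -
  have "haar_sum (dyadic_index a b) (y \<circ> half_left) (2 * t) = 0 \<or>
      haar_sum (dyadic_index a b) (y \<circ> half_right) (2 * t - 1) = 0"
    by (cases "2 * t \<in> {0..<1}") (auto simp: haar_sum_eq_0)
  then show ?thesis
    unfolding haar_sum_dyadic_index_Suc[OF assms] by (auto simp: power_mult_distrib)
qed

lemma integral_lborel_double: "(\<integral>t. 2 * f (c + 2 * t) \<partial>lborel) = (\<integral>t. f t \<partial>lborel)"
  for f :: "real \<Rightarrow> real"
  using lborel_integral_real_affine[of 2 f c] by simp

lemma haar_energy_dyadic_index_Suc:
  fixes y :: "nat \<times> int \<Rightarrow> 'b::real_normed_vector"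
  assumes "1 \<le> a"
  shows "haar_energy (dyadic_index (Suc a) (Suc b)) y =
    haar_energy (dyadic_index a b) (y \<circ> half_left) + haar_energy (dyadic_index a b) (y \<circ> half_right)"
proof -
  define f where "f = (\<lambda>(z :: nat \<times> int \<Rightarrow> 'b) t. (norm (haar_sum (dyadic_index a b) z t))\<^sup>2)"
  have integrable_f: "integrable lborel (\<lambda>t. f z (c + 2 * t))" for z c
    unfolding f_def
    by (intro lborel_integrable_real_affine integrable_norm_haar_sum_sq finite_dyadic_index) simp
  then have "haar_energy (dyadic_index (Suc a) (Suc b)) y =
      (\<integral>t. 2 * f (y \<circ> half_left) (0 + 2 * t) + 2 * f (y \<circ> half_right) (-1 + 2 * t) \<partial>lborel)"
    unfolding haar_energy_def norm_haar_sum_dyadic_index_Suc_sq[OF assms] f_def by simp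
  also have "\<dots> = (\<integral>t. 2 * f (y \<circ> half_left) (0 + 2 * t) \<partial>lborel) +
      (\<integral>t. 2 * f (y \<circ> half_right) (-1 + 2 * t) \<partial>lborel)"
    by (intro Bochner_Integration.integral_add integrable_mult_right integrable_f)
  also have "\<dots> = haar_energy (dyadic_index a b) (y \<circ> half_left) + haar_energy (dyadic_index a b) (y \<circ> half_right)"
    unfolding integral_lborel_double by (simp add: haar_energy_def f_def)
  finally show ?thesis .
qed

definition tau_admissible :: "('a::real_normed_vector \<Rightarrow> 'b::real_normed_vector) \<Rightarrow> (nat \<times> int) set \<Rightarrow> real \<Rightarrow> bool" where
  "tau_admissible T F c \<longleftrightarrow> 0 \<le> c \<and> (\<forall>x. haar_energy F (T \<circ> x) \<le> c\<^sup>2 * (\<Sum>p\<in>F. (norm (x p))\<^sup>2))"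

lemma tau_eq_Inf_admissible: "tau T F = Inf {c. tau_admissible T F c}"
proof -
  have iff: "L2_norm (\<lambda>t. \<Sum>(k, j)\<in>F. haar k j t *\<^sub>R T (x (k, j))) \<le> c * sqrt (\<Sum>(k, j)\<in>F. (norm (x (k, j)))\<^sup>2)
      \<longleftrightarrow> haar_energy F (T \<circ> x) \<le> c\<^sup>2 * (\<Sum>p\<in>F. (norm (x p))\<^sup>2)"
    if "0 \<le> c" for c and x :: "nat \<times> int \<Rightarrow> 'a"
  proof -
    have "(\<lambda>t. \<Sum>(k, j)\<in>F. haar k j t *\<^sub>R T (x (k, j))) = haar_sum F (T \<circ> x)"
      unfolding haar_sum_def by simp
    moreover have "c * sqrt (\<Sum>p\<in>F. (norm (x p))\<^sup>2) = sqrt (c\<^sup>2 * (\<Sum>p\<in>F. (norm (x p))\<^sup>2))"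
      using that by (simp add: real_sqrt_mult)
    ultimately show ?thesis
      by (simp add: L2_norm_haar_sum)
  qed
  then show ?thesis
    unfolding tau_def tau_admissible_def by (simp cong: conj_cong)
qed

lemma tau_admissible_dyadic_index_Suc:
  fixes T :: "'a::real_normed_vector \<Rightarrow> 'b::real_normed_vector"
  assumes "1 \<le> a" "T 0 = 0"
  shows "tau_admissible T (dyadic_index (Suc a) (Suc b)) c \<longleftrightarrow> tau_admissible T (dyadic_index a b) c"
proof
  assume adm: "tau_admissible T (dyadic_index (Suc a) (Suc b)) c"
  show "tau_admissible T (dyadic_index a b) c"
    unfolding tau_admissible_def
  proof (intro conjI allI)
    show "0 \<le> c"
      using adm unfolding tau_admissible_def by simp
    fix x :: "nat \<times> int \<Rightarrow> 'a"
    define x' where "x' q = (if q \<in> half_left ` dyadic_index a b then x (inv half_left q) else 0)" for q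
    have left: "x' (half_left p) = x p" and right: "x' (half_right p) = 0" if "p \<in> dyadic_index a b" for p
      using that disjoint_half_left_half_right inj_half_left unfolding x'_def by auto
    have "haar_energy (dyadic_index a b) (T \<circ> x' \<circ> half_left) = haar_energy (dyadic_index a b) (T \<circ> x)"
      by (rule haar_energy_cong) (simp add: left)
    moreover have "haar_energy (dyadic_index a b) (T \<circ> x' \<circ> half_right) = 0"
      by (rule haar_energy_eq_0) (simp add: right assms(2))
    moreover have "(\<Sum>p\<in>dyadic_index a b. (norm (x' (half_left p)))\<^sup>2) = (\<Sum>p\<in>dyadic_index a b. (norm (x p))\<^sup>2)"
      by (rule sum.cong) (simp_all add: left)
    moreover have "haar_energy (dyadic_index (Suc a) (Suc b)) (T \<circ> x') \<le>
        c\<^sup>2 * (\<Sum>p\<in>dyadic_index (Suc a) (Suc b). (norm (x' p))\<^sup>2)"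
      using adm unfolding tau_admissible_def by simp
    ultimately show "haar_energy (dyadic_index a b) (T \<circ> x) \<le> c\<^sup>2 * (\<Sum>p\<in>dyadic_index a b. (norm (x p))\<^sup>2)"
      unfolding haar_energy_dyadic_index_Suc[OF assms(1)] sum_dyadic_index_Suc[OF assms(1)]
      by (simp add: right)
  qed
next
  assume adm: "tau_admissible T (dyadic_index a b) c"
  show "tau_admissible T (dyadic_index (Suc a) (Suc b)) c"
    unfolding tau_admissible_def
  proof (intro conjI allI)
    show "0 \<le> c"
      using adm unfolding tau_admissible_def by simp
    fix x :: "nat \<times> int \<Rightarrow> 'a"
    have "haar_energy (dyadic_index a b) (T \<circ> (x \<circ> h)) \<le> c\<^sup>2 * (\<Sum>p\<in>dyadic_index a b. (norm ((x \<circ> h) p))\<^sup>2)" for h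
      using adm unfolding tau_admissible_def by blast
    then show "haar_energy (dyadic_index (Suc a) (Suc b)) (T \<circ> x) \<le>
        c\<^sup>2 * (\<Sum>p\<in>dyadic_index (Suc a) (Suc b). (norm (x p))\<^sup>2)"
      unfolding haar_energy_dyadic_index_Suc[OF assms(1)] sum_dyadic_index_Suc[OF assms(1)]
      by (simp add: comp_assoc distrib_left add_mono)
  qed
qed

lemma tau_dyadic_index_Suc:
  fixes T :: "'a::real_normed_vector \<Rightarrow> 'b::real_normed_vector"
  assumes "1 \<le> a" "T 0 = 0"
  shows "tau T (dyadic_index (Suc a) (Suc b)) = tau T (dyadic_index a b)"
  using assms by (simp add: tau_eq_Inf_admissible tau_admissible_dyadic_index_Suc)

lemma tau_dyadic_index_shift:
  fixes T :: "'a::real_normed_vector \<Rightarrow> 'b::real_normed_vector"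
  assumes "1 \<le> a" "T 0 = 0"
  shows "tau T (dyadic_index (a + m) (b + m)) = tau T (dyadic_index a b)"
proof (induction m)
  case (Suc m)
  then show ?case
    using assms tau_dyadic_index_Suc[of "a + m" T "b + m"] by simp
qed simp

theorem corollary3p12:
  fixes T :: "'a::banach \<Rightarrow> 'b::banach" and m n :: nat
  assumes "bounded_linear T"
  shows "tau T (dyadic_index (m + 1) (m + n)) = tau T (dyadic_index 1 n)"
proof -
  have "T 0 = 0"
    using assms by (simp add: bounded_linear.linear linear_0)
  then show ?thesis
    using tau_dyadic_index_shift[where a = 1 and b = n and m = m] by (simp add: add.commute)
qed

end
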